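(* For every $M\in\mathbb{R}^{n\times n}$ with block structure $0=n_0<n_1<\dots<n_m=n$, $$\|\mathcal{U}_b(M)\|_{S_\infty}\le(\lceil\log_2(m)\rceil+1)\|M\|_{S_\infty}.$$
   Context: Block $(i,j)$, $0\le i,j\le m-1$, consists of rows $n_i+1..n_{i+1}$ and columns $n_j+1..n_{j+1}$. $\mathcal{U}_b(M)$ has blocks $\mathcal{U}_b(M)(i,j)=M(i,j)$ for $i\le j$ and $0$ for $i>j$. $\|\cdot\|_{S_\infty}$ is the spectral norm. *)

theory Defs
  imports "HOL-Analysis.Analysis"
begin

text \<open>Indices of the matrix are the elements of a finite linearly ordered type 'n;
  the position (0-based) of an index i is the number of indices strictly below it.
  So the rows/columns n_a+1..n_(a+1) (1-based) are the indices with position in [n_a, n_(a+1)).\<close>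

definition idx_pos :: "'n::{finite,linorder} \<Rightarrow> nat" where
  "idx_pos i = card {j. j < i}"

definition in_block :: "(nat \<Rightarrow> nat) \<Rightarrow> nat \<Rightarrow> 'n::{finite,linorder} \<Rightarrow> bool" where
  "in_block nb a i \<longleftrightarrow> nb a \<le> idx_pos i \<and> idx_pos i < nb (Suc a)"

definition block_structure :: "(nat \<Rightarrow> nat) \<Rightarrow> nat \<Rightarrow> nat \<Rightarrow> bool" where
  "block_structure nb m n \<longleftrightarrow> nb 0 = 0 \<and> (\<forall>a<m. nb a < nb (Suc a)) \<and> nb m = n"

definition block_upper :: "(nat \<Rightarrow> nat) \<Rightarrow> nat \<Rightarrow> real^('n::{finite,linorder})^('n::{finite,linorder}) \<Rightarrow> real^('n::{finite,linorder})^('n::{finite,linorder})" where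
  "block_upper nb m M = (\<chi> r c. if (\<exists>a b. a \<le> b \<and> b < m \<and> in_block nb a r \<and> in_block nb b c)
                                 then M $ r $ c else 0)"

definition spec_norm :: "real^'n^'m \<Rightarrow> real" where
  "spec_norm M = onorm (\<lambda>x. M *v x)"

end

theory Submission
  imports Defs
begin

text \<open>Label every index by its block; more generally, bound the part of M whose
  row label is at most its column label, both labels lying in a range [lo, hi), by
  induction on the length of the range. Splitting the range at its midpoint writes this
  part as the parts for the two halves plus one rectangle of M (rows in the lower half,
  columns in the upper half). The two half-parts act on disjoint rows and disjoint
  columns, so their sum has norm at most the larger of their norms, while the rectangle
  is a compression of M. Each halving thus costs one extra \<open>\<parallel>M\<parallel>\<close>, and after
  \<open>\<lceil>log\<^sub>2 m\<rceil>\<close> halvings only single diagonal blocks remain.\<close>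

definition coord_proj :: "'n set \<Rightarrow> real^'n \<Rightarrow> real^'n" where
  "coord_proj S x = (\<chi> i. if i \<in> S then x $ i else 0)"

definition mat_restrict :: "'m set \<Rightarrow> 'n set \<Rightarrow> real^'n^'m \<Rightarrow> real^'n^'m" where
  "mat_restrict R C A = (\<chi> r c. if r \<in> R \<and> c \<in> C then A $ r $ c else 0)"

lemma coord_proj_idem [simp]: "coord_proj S (coord_proj S x) = coord_proj S x"
  by (simp add: coord_proj_def vec_eq_iff)

lemma norm_coord_proj_le: "norm (coord_proj S x) \<le> norm x"
  by (rule norm_le_componentwise_cart) (simp add: coord_proj_def)

lemma orthogonal_coord_proj:
  "R \<inter> S = {} \<Longrightarrow> orthogonal (coord_proj R x) (coord_proj S y)"
  unfolding orthogonal_def inner_vec_def coord_proj_def by (intro sum.neutral) auto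

lemma coord_proj_Un:
  "R \<inter> S = {} \<Longrightarrow> coord_proj R x + coord_proj S x = coord_proj (R \<union> S) x"
  by (auto simp: coord_proj_def vec_eq_iff)

lemma mat_restrict_mult_vec:
  "mat_restrict R C A *v x = coord_proj R (A *v coord_proj C x)"
  by (auto simp: vec_eq_iff matrix_vector_mult_def coord_proj_def mat_restrict_def
      intro!: sum.cong)

lemma bounded_linear_mult_vec: "bounded_linear (\<lambda>x. (A::real^'n^'m) *v x)"
  using matrix_vector_mul_bounded_linear[of A] by simp

lemma spec_norm_nonneg: "0 \<le> spec_norm A"
  unfolding spec_norm_def by (rule onorm_pos_le[OF bounded_linear_mult_vec])

lemma norm_mult_vec_le_spec_norm: "norm (A *v x) \<le> spec_norm A * norm x"
  unfolding spec_norm_def by (rule onorm[OF bounded_linear_mult_vec])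

lemma spec_norm_le:
  "0 \<le> b \<Longrightarrow> (\<And>x. norm (A *v x) \<le> b * norm x) \<Longrightarrow> spec_norm A \<le> b"
  unfolding spec_norm_def by (rule onorm_bound)

lemma spec_norm_triangle: "spec_norm (A + B) \<le> spec_norm A + spec_norm B"
  unfolding spec_norm_def matrix_vector_mult_add_rdistrib
  by (rule onorm_triangle[OF bounded_linear_mult_vec bounded_linear_mult_vec])

lemma spec_norm_mat_restrict_le: "spec_norm (mat_restrict R C A) \<le> spec_norm A"
proof (rule spec_norm_le[OF spec_norm_nonneg])
  fix x
  have "norm (mat_restrict R C A *v x) \<le> norm (A *v coord_proj C x)"
    unfolding mat_restrict_mult_vec by (rule norm_coord_proj_le)
  also have "\<dots> \<le> spec_norm A * norm (coord_proj C x)"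
    by (rule norm_mult_vec_le_spec_norm)
  also have "\<dots> \<le> spec_norm A * norm x"
    by (rule mult_left_mono[OF norm_coord_proj_le spec_norm_nonneg])
  finally show "norm (mat_restrict R C A *v x) \<le> spec_norm A * norm x" .
qed

lemma norm_mat_restrict_mult_vec_le:
  "norm (mat_restrict R C A *v x) \<le> spec_norm (mat_restrict R C A) * norm (coord_proj C x)"
proof -
  have "mat_restrict R C A *v x = mat_restrict R C A *v coord_proj C x"
    by (simp add: mat_restrict_mult_vec)
  then show ?thesis
    by (simp add: norm_mult_vec_le_spec_norm)
qed

text \<open>Pinching: both the inputs and the outputs of the two summands are orthogonal.\<close>

lemma spec_norm_disjoint_blocks_le:
  assumes "R1 \<inter> R2 = {}" and "C1 \<inter> C2 = {}"
  shows "spec_norm (mat_restrict R1 C1 A + mat_restrict R2 C2 B)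
    \<le> max (spec_norm (mat_restrict R1 C1 A)) (spec_norm (mat_restrict R2 C2 B))"
    (is "spec_norm (?A + ?B) \<le> ?\<mu>")
proof (rule spec_norm_le)
  show "0 \<le> ?\<mu>" by (simp add: le_max_iff_disj spec_norm_nonneg)
  fix x
  let ?x1 = "coord_proj C1 x" and ?x2 = "coord_proj C2 x"
  have y1: "?A *v x = coord_proj R1 (A *v ?x1)" and y2: "?B *v x = coord_proj R2 (B *v ?x2)"
    by (simp_all add: mat_restrict_mult_vec)
  have n1: "norm (?A *v x) \<le> ?\<mu> * norm ?x1"
    by (rule order_trans[OF norm_mat_restrict_mult_vec_le]) (simp add: mult_right_mono)
  have n2: "norm (?B *v x) \<le> ?\<mu> * norm ?x2"
    by (rule order_trans[OF norm_mat_restrict_mult_vec_le]) (simp add: mult_right_mono)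
  have "(norm ((?A + ?B) *v x))\<^sup>2 = (norm (?A *v x))\<^sup>2 + (norm (?B *v x))\<^sup>2"
    unfolding matrix_vector_mult_add_rdistrib y1 y2
    by (rule norm_add_Pythagorean[OF orthogonal_coord_proj[OF assms(1)]])
  also have "\<dots> \<le> (?\<mu> * norm ?x1)\<^sup>2 + (?\<mu> * norm ?x2)\<^sup>2"
    by (intro add_mono power_mono n1 n2 norm_ge_zero)
  also have "\<dots> = ?\<mu>\<^sup>2 * (norm (?x1 + ?x2))\<^sup>2"
    by (simp add: norm_add_Pythagorean[OF orthogonal_coord_proj[OF assms(2)]]
        algebra_simps)
  also have "\<dots> \<le> (?\<mu> * norm x)\<^sup>2"
    unfolding coord_proj_Un[OF assms(2)] power_mult_distrib
    by (intro mult_left_mono power_mono norm_coord_proj_le) auto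
  finally show "norm ((?A + ?B) *v x) \<le> ?\<mu> * norm x"
    by (rule power2_le_imp_le) (simp add: le_max_iff_disj spec_norm_nonneg)
qed

definition label_set :: "('n \<Rightarrow> nat) \<Rightarrow> nat \<Rightarrow> nat \<Rightarrow> 'n set" where
  "label_set \<beta> lo hi = {i. lo \<le> \<beta> i \<and> \<beta> i < hi}"

definition label_upper :: "('n \<Rightarrow> nat) \<Rightarrow> nat \<Rightarrow> nat \<Rightarrow> real^'n^'n \<Rightarrow> real^'n^'n" where
  "label_upper \<beta> lo hi M =
     (\<chi> r c. if lo \<le> \<beta> r \<and> \<beta> r \<le> \<beta> c \<and> \<beta> c < hi then M $ r $ c else 0)"

lemma label_upper_eq_mat_restrict:
  "label_upper \<beta> lo hi M =
     mat_restrict (label_set \<beta> lo hi) (label_set \<beta> lo hi) (label_upper \<beta> lo hi M)"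
  by (auto simp: vec_eq_iff label_upper_def mat_restrict_def label_set_def)

lemma label_upper_single_label:
  "hi \<le> Suc lo \<Longrightarrow>
     label_upper \<beta> lo hi M = mat_restrict (label_set \<beta> lo hi) (label_set \<beta> lo hi) M"
  by (auto simp: vec_eq_iff label_upper_def mat_restrict_def label_set_def)

lemma label_upper_split:
  "lo \<le> mid \<Longrightarrow> mid \<le> hi \<Longrightarrow>
     label_upper \<beta> lo hi M = label_upper \<beta> lo mid M + label_upper \<beta> mid hi M
       + mat_restrict (label_set \<beta> lo mid) (label_set \<beta> mid hi) M"
  by (auto simp: vec_eq_iff label_upper_def mat_restrict_def label_set_def)

lemma label_set_disjoint: "mid \<le> mid' \<Longrightarrow> label_set \<beta> lo mid \<inter> label_set \<beta> mid' hi = {}"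
  by (auto simp: label_set_def)

lemma spec_norm_label_upper_le:
  "lo \<le> hi \<Longrightarrow> hi \<le> lo + 2 ^ k \<Longrightarrow>
     spec_norm (label_upper \<beta> lo hi M) \<le> (real k + 1) * spec_norm M"
proof (induction k arbitrary: lo hi)
  case 0
  then have "hi \<le> Suc lo" by simp
  then show ?case
    by (simp add: label_upper_single_label spec_norm_mat_restrict_le)
next
  case (Suc k)
  define mid where "mid = min hi (lo + 2 ^ k)"
  let ?L = "label_upper \<beta> lo mid M" and ?R = "label_upper \<beta> mid hi M"
  have IH: "spec_norm ?L \<le> (real k + 1) * spec_norm M"
    "spec_norm ?R \<le> (real k + 1) * spec_norm M"
    using Suc by (auto simp: mid_def intro!: Suc.IH)
  have "label_upper \<beta> lo hi M
      = ?L + ?R + mat_restrict (label_set \<beta> lo mid) (label_set \<beta> mid hi) M"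
    by (rule label_upper_split) (use Suc.prems in \<open>auto simp: mid_def\<close>)
  then have "spec_norm (label_upper \<beta> lo hi M)
      \<le> spec_norm (?L + ?R)
        + spec_norm (mat_restrict (label_set \<beta> lo mid) (label_set \<beta> mid hi) M)"
    by (simp add: spec_norm_triangle)
  also have "\<dots> \<le> max (spec_norm ?L) (spec_norm ?R) + spec_norm M"
    by (intro add_mono spec_norm_mat_restrict_le, subst (1 2 3 4) label_upper_eq_mat_restrict)
      (intro spec_norm_disjoint_blocks_le label_set_disjoint order.refl)
  also have "\<dots> \<le> (real (Suc k) + 1) * spec_norm M"
    using IH by (simp add: algebra_simps)
  finally show ?case .
qed

lemma block_structure_mono:
  assumes "block_structure nb m n" and "a \<le> a'" and "a' \<le> m"
  shows "nb a \<le> nb a'"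
  using assms(2,3)
proof (induction a' rule: dec_induct)
  case (step a')
  then show ?case
    using assms(1) unfolding block_structure_def by (metis Suc_le_lessD less_imp_le order_trans)
qed simp

lemma in_block_unique:
  assumes "block_structure nb m n" and "a < m" "a' < m" and "in_block nb a i" "in_block nb a' i"
  shows "a = a'"
proof -
  have "\<not> a < a'" if "a < m" "a' < m" "in_block nb a i" "in_block nb a' i" for a a'
    using that block_structure_mono[OF assms(1), of "Suc a" a'] by (auto simp: in_block_def)
  then show ?thesis
    using assms by (meson linorder_neqE_nat)
qed

lemma exists_step_interval:
  fixes nb :: "nat \<Rightarrow> 'a::linorder"
  shows "nb 0 \<le> p \<Longrightarrow> p < nb m \<Longrightarrow> \<exists>a<m. nb a \<le> p \<and> p < nb (Suc a)"
proof (induction m)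
  case (Suc m)
  show ?case
  proof (cases "p < nb m")
    case True
    then show ?thesis using Suc by (meson less_SucI)
  next
    case False
    then show ?thesis using Suc.prems by (intro exI[of _ m]) auto
  qed
qed simp

lemma idx_pos_less_card: "idx_pos (i :: 'n::{finite,linorder}) < CARD('n)"
  unfolding idx_pos_def by (rule psubset_card_mono) auto

definition block_index :: "(nat \<Rightarrow> nat) \<Rightarrow> nat \<Rightarrow> 'n::{finite,linorder} \<Rightarrow> nat" where
  "block_index nb m i = (THE a. a < m \<and> in_block nb a i)"

lemma block_index:
  assumes "block_structure nb m CARD('n)"
  shows "block_index nb m (i :: 'n::{finite,linorder}) < m \<and> in_block nb (block_index nb m i) i"
proof -
  have "\<exists>a<m. in_block nb a i"
    using exists_step_interval[of nb "idx_pos i" m] assms idx_pos_less_card[of i]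
    by (auto simp: block_structure_def in_block_def)
  then have "\<exists>!a. a < m \<and> in_block nb a i"
    using in_block_unique[OF assms] by blast
  then show ?thesis
    unfolding block_index_def by (rule theI')
qed

lemma block_upper_eq_label_upper:
  fixes M :: "real^('n::{finite,linorder})^('n::{finite,linorder})"
  assumes "block_structure nb m CARD('n)"
  shows "block_upper nb m M = label_upper (block_index nb m) 0 m M"
proof -
  have in_block_iff: "in_block nb a i \<longleftrightarrow> block_index nb m i = a" if "a < m" for a and i :: 'n
    using block_index[OF assms, of i] in_block_unique[OF assms that] by auto
  have "(\<exists>a b. a \<le> b \<and> b < m \<and> in_block nb a r \<and> in_block nb b c)
      \<longleftrightarrow> block_index nb m r \<le> block_index nb m c" for r c :: 'n
    using in_block_iff block_index[OF assms] by (metis le_less_trans)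
  then show ?thesis
    unfolding block_upper_def label_upper_def
    using block_index[OF assms] by (simp add: vec_eq_iff)
qed

lemma le_two_power_ceiling_log2: "1 \<le> m \<Longrightarrow> m \<le> 2 ^ nat \<lceil>log 2 (real m)\<rceil>"
proof -
  assume "1 \<le> m"
  then have "real m = 2 powr log 2 (real m)" by simp
  also have "\<dots> \<le> 2 powr real (nat \<lceil>log 2 (real m)\<rceil>)"
    by (intro powr_mono real_nat_ceiling_ge) auto
  finally show ?thesis
    by (simp add: powr_realpow flip: of_nat_le_iff)
qed

theorem mainTheorem11:
  fixes M :: "real^('n::{finite,linorder})^('n::{finite,linorder})" and nb :: "nat \<Rightarrow> nat" and m :: nat
  assumes "block_structure nb m CARD('n)"
  shows "spec_norm (block_upper nb m M) \<le> (real_of_int \<lceil>log 2 (real m)\<rceil> + 1) * spec_norm M"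
proof -
  have "1 \<le> m"
    using assms by (cases m) (auto simp: block_structure_def)
  define k where "k = nat \<lceil>log 2 (real m)\<rceil>"
  have "spec_norm (label_upper (block_index nb m) 0 m M) \<le> (real k + 1) * spec_norm M"
    using le_two_power_ceiling_log2[OF \<open>1 \<le> m\<close>]
    by (intro spec_norm_label_upper_le) (simp_all add: k_def)
  moreover have "real k = real_of_int \<lceil>log 2 (real m)\<rceil>"
    using \<open>1 \<le> m\<close> by (simp add: k_def)
  ultimately show ?thesis
    by (simp add: block_upper_eq_label_upper[OF assms])
qed

end
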